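(* Let $m,u$ be independent indeterminates over $\mathbb{Q}$ and set $q=\frac{2(u-m)}{1+m^2-u^2}$. Then $\operatorname{rank}E_{m,q}(\mathbb{Q}(m,u))\ge2$. More precisely, the points $P_{m,q}=\bigl(-\tfrac{(2m^2-1)q^2+4mq+1}{3},\,q(mq+1)^2\bigr)$ and $H_{m,q}=(x_{m,u},y_{m,u})$ with $$x_{m,u}=\frac{5m^4+(6-10u)m^3+(4u^2-6u+10)m^2+2(u^3-3u^2-5u+3)m-u^4+6u^3-6u+5}{3(m^2-u^2+1)^2},\quad y_{m,u}=\frac{2(m-u+1)^2(m^2-um+1)}{(m^2-u^2+1)^2}$$ lie in $E_{m,q}(\mathbb{Q}(m,u))$ and are linearly independent.
   Context: For $m,q$ (rational numbers or elements of a field), $E_{m,q}$ denotes the curve given by the Weierstrass equation $$y^2=x^3-\tfrac13\bigl[(m^2+1)^2q^4+4m(m^2+1)q^3+(5m^2+4)q^2+2mq+1\bigr]x+\tfrac1{27}\bigl[2(m^2+1)^2q^4+8m(m^2+1)q^3+(7m^2+8)q^2-2mq-1\bigr]\bigl[(m^2+1)q^2+2mq+2\bigr].$$ *)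

theory Defs
  imports "HOL-Computational_Algebra.Polynomial" "HOL-Computational_Algebra.Fraction_Field"
begin

text \<open>Q(m,u) is the fraction field of the bivariate polynomial ring Q[m][u],
  realised as rat poly poly (outer variable u, coefficients in Q[m]).\<close>

type_synonym Qmu = "rat poly poly fract"

definition mvar :: Qmu where "mvar = Fract [:[:0, 1:]:] 1"
definition uvar :: Qmu where "uvar = Fract [:0, 1:] 1"

text \<open>Points: None is the point at infinity O, Some (x,y) an affine point.\<close>

definition on_curve :: "'a::field \<Rightarrow> 'a \<Rightarrow> ('a \<times> 'a) option \<Rightarrow> bool" where
  "on_curve A B P = (case P of None \<Rightarrow> True
     | Some (x, y) \<Rightarrow> y^2 = x^3 + A * x + B)"

definition nonsingular :: "'a::field \<Rightarrow> 'a \<Rightarrow> bool" where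
  "nonsingular A B = (4 * A^3 + 27 * B^2 \<noteq> 0)"

definition ec_neg :: "('a::field \<times> 'a) option \<Rightarrow> ('a \<times> 'a) option" where
  "ec_neg P = (case P of None \<Rightarrow> None | Some (x, y) \<Rightarrow> Some (x, - y))"

definition ec_add :: "'a::field \<Rightarrow> ('a \<times> 'a) option \<Rightarrow> ('a \<times> 'a) option \<Rightarrow> ('a \<times> 'a) option" where
  "ec_add A P Q = (case P of None \<Rightarrow> Q | Some (x1, y1) \<Rightarrow>
     (case Q of None \<Rightarrow> P | Some (x2, y2) \<Rightarrow>
       (if x1 = x2 \<and> y1 = - y2 then None
        else let l = (if x1 = x2 then (3 * x1^2 + A) / (2 * y1) else (y2 - y1) / (x2 - x1));
                 x3 = l^2 - x1 - x2
             in Some (x3, - (y1 + l * (x3 - x1))))))"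

definition ec_zmul :: "'a::field \<Rightarrow> int \<Rightarrow> ('a \<times> 'a) option \<Rightarrow> ('a \<times> 'a) option" where
  "ec_zmul A n P = (if 0 \<le> n then (ec_add A P ^^ nat n) None
                    else ec_neg ((ec_add A P ^^ nat (- n)) None))"

definition EA :: "'a::field \<Rightarrow> 'a \<Rightarrow> 'a" where
  "EA m q = - (1/3) * ((m^2+1)^2*q^4 + 4*m*(m^2+1)*q^3 + (5*m^2+4)*q^2 + 2*m*q + 1)"

definition EB :: "'a::field \<Rightarrow> 'a \<Rightarrow> 'a" where
  "EB m q = (1/27) * (2*(m^2+1)^2*q^4 + 8*m*(m^2+1)*q^3 + (7*m^2+8)*q^2 - 2*m*q - 1)
              * ((m^2+1)*q^2 + 2*m*q + 2)"

definition Ppt :: "'a::field \<Rightarrow> 'a \<Rightarrow> ('a \<times> 'a) option" where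
  "Ppt m q = Some (- ((2*m^2-1)*q^2 + 4*m*q + 1) / 3, q * (m*q+1)^2)"

definition Hpt :: "'a::field \<Rightarrow> 'a \<Rightarrow> ('a \<times> 'a) option" where
  "Hpt m u = Some (
     (5*m^4 + (6-10*u)*m^3 + (4*u^2-6*u+10)*m^2 + 2*(u^3-3*u^2-5*u+3)*m - u^4 + 6*u^3 - 6*u + 5)
       / (3 * (m^2-u^2+1)^2),
     2*(m-u+1)^2*(m^2-u*m+1) / (m^2-u^2+1)^2)"

end

theory Submission
  imports Defs "HOL-Algebra.Group" "HOL-Computational_Algebra.Nth_Powers"
begin

text \<open>The proof is a 2-descent. Over \<open>K = Q(m, u)\<close> the curve has the 2-torsion point
  \<open>T = (e0, 0)\<close> with \<open>e0 = ((m^2 + 1) q^2 + 2 m q + 2) / 3\<close>, and \<open>f'(e0) = (m q + 1)^2\<close>.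
  Sending \<open>(x, y) \<noteq> T\<close> to \<open>x - e0\<close> and \<open>T\<close> to \<open>f'(e0)\<close> gives a homomorphism
  \<open>E(K) \<rightarrow> K\<^sup>*/K\<^sup>*\<^sup>2\<close>. The images of \<open>P\<close>, \<open>H\<close> and \<open>P + H\<close> are nonsquares, so a relation
  \<open>a P + b H = O\<close> has \<open>a, b\<close> even, and \<open>X = (a/2) P + (b/2) H\<close> satisfies \<open>2 X = O\<close>. Since
  \<open>E(K)[2] = {O, T}\<close>, and \<open>T\<close> has square image but is not twice a point, \<open>X = O\<close>: every relation
  halves, so \<open>a\<close> and \<open>b\<close> are divisible by all powers of 2.
  The group law (associativity included) is derived from Vieta's relations for a line meeting
  the cubic, and nonvanishing and nonsquareness in \<open>K\<close> are read off at \<open>(m, u) = (1, -2)\<close>.\<close>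

section \<open>Lines meeting a Weierstrass cubic\<close>

text \<open>The line \<open>y = L x + n\<close> meets \<open>y^2 = x^3 + A x + B\<close> at the abscissae \<open>x1, x2, x3\<close>
  (with multiplicity): Vieta's relations for
  \<open>x^3 + A x + B - (L x + n)^2 = (x - x1)(x - x2)(x - x3)\<close>.\<close>

definition line_meets :: "'a::field \<Rightarrow> 'a \<Rightarrow> 'a \<Rightarrow> 'a \<Rightarrow> 'a \<Rightarrow> 'a \<Rightarrow> 'a \<Rightarrow> bool" where
  "line_meets A B L n x1 x2 x3 \<longleftrightarrow>
     L^2 = x1 + x2 + x3 \<and> A - 2*L*n = x1*x2 + x1*x3 + x2*x3 \<and> B - n^2 = - (x1*x2*x3)"

lemma line_meets_on_curve:
  assumes "line_meets A B L n x1 x2 x3"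
  shows "(L*x1 + n)^2 = x1^3 + A*x1 + B" "(L*x2 + n)^2 = x2^3 + A*x2 + B"
    "(L*x3 + n)^2 = x3^3 + A*x3 + B"
  using assms unfolding line_meets_def by algebra+

lemma line_meets_swap:
  "line_meets A B L n x1 x2 x3 \<Longrightarrow> line_meets A B L n x2 x1 x3"
  "line_meets A B L n x1 x2 x3 \<Longrightarrow> line_meets A B L n x1 x3 x2"
  unfolding line_meets_def by (auto simp: algebra_simps)

lemma line_meets_reflect:
  "line_meets A B L n x1 x2 x3 \<Longrightarrow> line_meets A B (-L) (-n) x1 x2 x3"
  unfolding line_meets_def by (auto simp: algebra_simps)

lemma line_meets_chord:
  fixes A B :: "'a::field_char_0"
  assumes "(L*x1 + n)^2 = x1^3 + A*x1 + B" "(L*x2 + n)^2 = x2^3 + A*x2 + B" "x1 \<noteq> x2"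
    and x3: "x3 = L^2 - x1 - x2"
  shows "line_meets A B L n x1 x2 x3"
proof -
  have "(x1 - x2) * (A - 2*L*n - (x1*x2 + x1*x3 + x2*x3)) = 0"
    using assms(1,2) x3 by algebra
  with \<open>x1 \<noteq> x2\<close> have a: "A - 2*L*n = x1*x2 + x1*x3 + x2*x3" by simp
  moreover have "B - n^2 = - (x1*x2*x3)" using a assms(1) x3 by algebra
  ultimately show ?thesis unfolding line_meets_def using x3 by simp
qed

lemma line_meets_tangent:
  fixes A B :: "'a::field_char_0"
  assumes "(L*x1 + n)^2 = x1^3 + A*x1 + B" "2*L*(L*x1 + n) = 3*x1^2 + A"
    and x3: "x3 = L^2 - 2*x1"
  shows "line_meets A B L n x1 x1 x3"
proof -
  have a: "A - 2*L*n = x1*x1 + x1*x3 + x1*x3" using assms(2) x3 by algebra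
  moreover have "B - n^2 = - (x1*x1*x3)" using a assms(1) x3 by algebra
  ultimately show ?thesis unfolding line_meets_def using x3 by (simp add: power2_eq_square)
qed

lemma line_meets_tangent_slope:
  "line_meets A B L n x1 x1 x3 \<Longrightarrow> 2*L*(L*x1 + n) = 3*x1^2 + (A::'a::field)"
  unfolding line_meets_def by algebra

lemma line_meets_tangent_on_x_axis_singular:
  "line_meets A B L n x1 x1 x3 \<Longrightarrow> L*x1 + n = 0 \<Longrightarrow> 4*A^3 + 27*B^2 = (0::'a::field)"
  unfolding line_meets_def by algebra

lemma ec_add_distinct_x:
  "x1 \<noteq> x2 \<Longrightarrow> ec_add A (Some (x1, y1)) (Some (x2, y2)) =
     (let l = (y2 - y1)/(x2 - x1); x3 = l^2 - x1 - x2 in Some (x3, -(y1 + l*(x3 - x1))))"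
  by (simp add: ec_add_def)

lemma ec_add_double:
  fixes y1 :: "'a::field_char_0"
  shows "y1 \<noteq> 0 \<Longrightarrow> ec_add A (Some (x1, y1)) (Some (x1, y1)) =
     (let l = (3*x1^2 + A)/(2*y1); x3 = l^2 - x1 - x1 in Some (x3, -(y1 + l*(x3 - x1))))"
  by (auto simp: ec_add_def)

lemma ec_add_line_meets:
  fixes A B :: "'a::field_char_0"
  assumes meets: "line_meets A B L n x1 x2 x3" and "nonsingular A B"
  shows "ec_add A (Some (x1, L*x1 + n)) (Some (x2, L*x2 + n)) = Some (x3, -(L*x3 + n))"
proof -
  have x3: "x3 = L^2 - x1 - x2" using meets unfolding line_meets_def by simp
  show ?thesis
  proof (cases "x1 = x2")
    case True
    with meets have double: "line_meets A B L n x1 x1 x3" by simp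
    have nz: "L*x1 + n \<noteq> 0"
      using line_meets_tangent_on_x_axis_singular[OF double] \<open>nonsingular A B\<close>
      unfolding nonsingular_def by auto
    have "3*x1^2 + A = L * (2*(L*x1 + n))"
      using line_meets_tangent_slope[OF double] by (simp add: algebra_simps)
    moreover have "2*(L*x1 + n) \<noteq> 0" using nz by (metis mult_eq_0_iff zero_neq_numeral)
    ultimately have "(3*x1^2 + A) / (2*(L*x1 + n)) = L" by simp
    then show ?thesis
      unfolding True[symmetric]
      by (simp only: ec_add_double[OF nz] Let_def) (simp add: x3 True algebra_simps)
  next
    case False
    then have "(L*x2 + n - (L*x1 + n)) / (x2 - x1) = L" by (simp add: field_simps)
    then show ?thesis using False by (simp add: ec_add_distinct_x Let_def x3 algebra_simps)
  qed
qed

lemma line_meets_ec_add: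
  fixes A B :: "'a::field_char_0"
  assumes c1: "on_curve A B (Some (x1, y1))" and c2: "on_curve A B (Some (x2, y2))"
    and sum: "ec_add A (Some (x1, y1)) (Some (x2, y2)) = Some (x3, y3)"
  shows "\<exists>L n. y1 = L*x1 + n \<and> y2 = L*x2 + n \<and> y3 = -(L*x3 + n) \<and> line_meets A B L n x1 x2 x3"
proof (cases "x1 = x2")
  case True
  have "y1 \<noteq> -y2" using sum True by (auto simp: ec_add_def)
  moreover have "(y1 - y2)*(y1 + y2) = 0" using c1 c2 True by (simp add: on_curve_def) algebra
  ultimately have y2: "y2 = y1" and "y1 \<noteq> 0" by (auto simp: add_eq_0_iff2)
  define L where "L = (3*x1^2 + A)/(2*y1)"
  define n where "n = y1 - L*x1"
  have y1: "y1 = L*x1 + n" unfolding n_def by simp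
  have x3: "x3 = L^2 - 2*x1" and y3: "y3 = -(y1 + L*(x3 - x1))"
    using sum \<open>y1 \<noteq> 0\<close> unfolding True[symmetric] y2 by (auto simp: ec_add_double Let_def L_def)
  have "2*L*y1 = 3*x1^2 + A" using \<open>y1 \<noteq> 0\<close> unfolding L_def by simp
  then have "line_meets A B L n x1 x1 x3"
    using c1 y1 x3 by (intro line_meets_tangent) (auto simp: on_curve_def)
  moreover have "y3 = -(L*x3 + n)" using y3 y1 by (simp add: algebra_simps)
  ultimately show ?thesis using True y1 y2 by blast
next
  case False
  define L where "L = (y2 - y1)/(x2 - x1)"
  define n where "n = y1 - L*x1"
  have y1: "y1 = L*x1 + n" unfolding n_def by simp
  have "L*(x2 - x1) = y2 - y1" using False unfolding L_def by simp
  then have y2: "y2 = L*x2 + n" unfolding n_def by (simp add: algebra_simps)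
  have x3: "x3 = L^2 - x1 - x2" and y3: "y3 = -(y1 + L*(x3 - x1))"
    using sum False by (auto simp: ec_add_distinct_x Let_def L_def)
  have "line_meets A B L n x1 x2 x3"
    using c1 c2 y1 y2 x3 False by (intro line_meets_chord) (auto simp: on_curve_def)
  moreover have "y3 = -(L*x3 + n)" using y3 y1 by (simp add: algebra_simps)
  ultimately show ?thesis using y1 y2 by blast
qed

text \<open>The lines \<open>(L, n)\<close> through \<open>P, Q, -(P + Q)\<close>,
  \<open>(M, k)\<close> through \<open>Q, R, -(Q + R)\<close> and \<open>(N, j)\<close> through \<open>P + Q, R, -((P + Q) + R)\<close>
  have abscissae \<open>x1, x2, x4\<close>, \<open>x2, x3, x5\<close> and \<open>x4, x3, x6\<close>. Then the line of slope
  \<open>L + N - M\<close> through \<open>Q + R = (x5, -(M x5 + k))\<close> passes through \<open>P\<close> and \<open>-((P + Q) + R)\<close>.\<close>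

lemma line_meets_assoc_abscissa:
  fixes A B :: "'a::field_char_0"
  assumes h1: "line_meets A B L n x1 x2 x4" and h2: "line_meets A B M k x2 x3 x5"
    and h3: "line_meets A B N j x4 x3 x6"
    and Q: "M*x2 + k = L*x2 + n" and R: "N*x3 + j = M*x3 + k" and S: "N*x4 + j = -(L*x4 + n)"
    and nondeg: "x3 \<noteq> x4 \<or> x2 \<noteq> x4"
  shows "x4 = L*M - L*N + M*N - x2 - x3"
proof -
  have x1: "x1 = L^2 - x2 - x4" and a1: "A - 2*L*n = x1*x2 + x1*x4 + x2*x4"
    using h1 unfolding line_meets_def by auto
  have x5: "x5 = M^2 - x2 - x3" and a2: "A - 2*M*k = x2*x3 + x2*x5 + x3*x5"
    using h2 unfolding line_meets_def by auto
  have x6: "x6 = N^2 - x3 - x4" and a3: "A - 2*N*j = x4*x3 + x4*x6 + x3*x6"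
    using h3 unfolding line_meets_def by auto
  have k: "k = L*x2 + n - M*x2" using Q by (simp add: algebra_simps)
  have j: "j = M*x3 + k - N*x3" using R by (simp add: algebra_simps)
  have n: "n = (-(L+N)*x4 - (L-M)*x2 - (M-N)*x3)/2" using S j k by (simp add: field_simps)
  define \<phi> where "\<phi> = L*M - L*N + M*N - x2 - x3 - x4"
  have "(x3 - x4) * \<phi> = 0"
  proof -
    have "2*L*n + x1*x2 + x1*x4 + x2*x4 = 2*M*k + x2*x3 + x2*x5 + x3*x5" using a1 a2 by algebra
    then show ?thesis unfolding \<phi>_def x1 x5 k n by (simp add: field_simps) algebra
  qed
  moreover have "(x4 - x2) * \<phi> = 0"
  proof -
    have "2*M*k + x2*x3 + x2*x5 + x3*x5 = 2*N*j + x4*x3 + x4*x6 + x3*x6" using a2 a3 by algebra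
    then show ?thesis unfolding \<phi>_def x6 x5 j k n by (simp add: field_simps) algebra
  qed
  ultimately have "\<phi> = 0" using nondeg by (cases "x3 = x4") auto
  then show ?thesis unfolding \<phi>_def by (simp add: algebra_simps)
qed

lemma line_meets_assoc:
  fixes A B :: "'a::field_char_0"
  assumes h1: "line_meets A B L n x1 x2 x4" and h2: "line_meets A B M k x2 x3 x5"
    and h3: "line_meets A B N j x4 x3 x6"
    and Q: "M*x2 + k = L*x2 + n" and R: "N*x3 + j = M*x3 + k" and S: "N*x4 + j = -(L*x4 + n)"
    and nondeg: "x3 \<noteq> x4 \<or> x2 \<noteq> x4"
  shows "line_meets A B (L+N-M) (-(L+N)*x5 - k) x1 x5 x6"
    and "(L+N-M)*x1 + (-(L+N)*x5 - k) = L*x1 + n"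
    and "(L+N-M)*x6 + (-(L+N)*x5 - k) = N*x6 + j"
proof -
  have x1: "x1 = L^2 - x2 - x4" using h1 unfolding line_meets_def by auto
  have x5: "x5 = M^2 - x2 - x3" and a2: "A - 2*M*k = x2*x3 + x2*x5 + x3*x5"
    and b2: "B - k^2 = - (x2*x3*x5)"
    using h2 unfolding line_meets_def by auto
  have x6: "x6 = N^2 - x3 - x4" using h3 unfolding line_meets_def by auto
  have k: "k = L*x2 + n - M*x2" using Q by (simp add: algebra_simps)
  have j: "j = M*x3 + k - N*x3" using R by (simp add: algebra_simps)
  have n: "n = (-(L+N)*x4 - (L-M)*x2 - (M-N)*x3)/2" using S j k by (simp add: field_simps)
  note x4 = line_meets_assoc_abscissa[OF assms]
  have sum: "x1 + x6 = x2 + x3 + (L+N)*(L+N-2*M)"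
    unfolding x1 x6 x4 by algebra
  have prod: "x1*x6 = x2*x3 + 2*(L+N)*k + (L+N)^2*x5"
    unfolding x1 x6 x5 k n x4 by (simp add: field_simps) algebra
  show "(L+N-M)*x1 + (-(L+N)*x5 - k) = L*x1 + n"
    unfolding x1 x5 k n x4 by (simp add: field_simps) algebra
  show "(L+N-M)*x6 + (-(L+N)*x5 - k) = N*x6 + j"
    unfolding x6 x5 j k n x4 by (simp add: field_simps) algebra
  have "(L+N-M)^2 = x1 + x5 + x6"
    unfolding x1 x5 x6 x4 by algebra
  moreover have "A - 2*(L+N-M)*(-(L+N)*x5 - k) = x1*x5 + x1*x6 + x5*x6"
  proof -
    have "x1*x5 + x1*x6 + x5*x6 = x5*(x1 + x6) + x1*x6" by algebra
    then show ?thesis unfolding sum prod using a2 by algebra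
  qed
  moreover have "B - (-(L+N)*x5 - k)^2 = - (x1*x5*x6)"
    using b2 prod by algebra
  ultimately show "line_meets A B (L+N-M) (-(L+N)*x5 - k) x1 x5 x6"
    unfolding line_meets_def by simp
qed

section \<open>The group law\<close>

lemma ec_add_None_left [simp]: "ec_add A None P = P"
  by (simp add: ec_add_def)

lemma ec_add_None_right [simp]: "ec_add A P None = P"
  by (cases P) (auto simp: ec_add_def)

lemma ec_neg_None [simp]: "ec_neg None = None"
  by (simp add: ec_neg_def)

lemma ec_neg_Some [simp]: "ec_neg (Some (x, y)) = Some (x, -y)"
  by (simp add: ec_neg_def)

lemma ec_neg_ec_neg [simp]: "ec_neg (ec_neg P) = P"
  by (cases P) auto

lemma on_curve_None [simp]: "on_curve A B None"
  by (simp add: on_curve_def)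

lemma on_curve_ec_neg [simp]: "on_curve A B (ec_neg P) = on_curve A B P"
  by (cases P) (auto simp: on_curve_def)

lemma ec_add_eq_None_iff: "ec_add A P Q = None \<longleftrightarrow> Q = ec_neg P"
  by (cases P; cases Q) (auto simp: ec_add_def Let_def split: if_splits)

lemma ec_add_neg_right [simp]: "ec_add A P (ec_neg P) = None"
  by (simp add: ec_add_eq_None_iff)

lemma ec_add_neg_left [simp]: "ec_add A (ec_neg P) P = None"
  by (simp add: ec_add_eq_None_iff)

locale weierstrass_curve =
  fixes A B :: "'a::field_char_0"
  assumes nonsingular: "nonsingular A B"
begin

abbreviation on_E :: "('a \<times> 'a) option \<Rightarrow> bool" where
  "on_E \<equiv> on_curve A B"

abbreviation add :: "('a \<times> 'a) option \<Rightarrow> ('a \<times> 'a) option \<Rightarrow> ('a \<times> 'a) option"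
    (infixl "\<oplus>" 65) where
  "P \<oplus> Q \<equiv> ec_add A P Q"

lemma ec_add_cases [consumes 2, case_names left_None right_None inverse line]:
  assumes "on_E P" "on_E Q"
  obtains "P = None" | "Q = None" | "Q = ec_neg P"
  | x1 x2 x3 L n where "P = Some (x1, L*x1 + n)" "Q = Some (x2, L*x2 + n)"
      "line_meets A B L n x1 x2 x3" "P \<oplus> Q = Some (x3, -(L*x3 + n))"
proof -
  consider "P = None" | "Q = None" | "P \<oplus> Q = None"
    | x1 y1 x2 y2 x3 y3 where "P = Some (x1, y1)" "Q = Some (x2, y2)" "P \<oplus> Q = Some (x3, y3)"
    by (metis option.exhaust surj_pair)
  then show thesis
  proof cases
    case 3
    then show thesis using that(3) by (simp add: ec_add_eq_None_iff)
  next
    case 4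
    with line_meets_ec_add[of A B x1 y1 x2 y2 x3 y3] assms that(4) show thesis by auto
  qed (use that in blast)+
qed

lemma on_curve_ec_add:
  assumes "on_E P" "on_E Q" shows "on_E (P \<oplus> Q)"
  using assms
proof (cases rule: ec_add_cases)
  case (line x1 x2 x3 L n)
  have "(- (L*x3) - n)^2 = (L*x3 + n)^2" by algebra
  with line_meets_on_curve(3)[OF line(3)] show ?thesis by (simp add: line(4) on_curve_def)
qed (use assms in auto)

lemma ec_add_commute:
  assumes "on_E P" "on_E Q" shows "P \<oplus> Q = Q \<oplus> P"
  using assms
proof (cases rule: ec_add_cases)
  case (line x1 x2 x3 L n)
  with ec_add_line_meets[OF line_meets_swap(1)[OF line(3)] nonsingular] show ?thesis by simp
qed auto

lemma ec_neg_ec_add: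
  assumes "on_E P" "on_E Q" shows "ec_neg (P \<oplus> Q) = ec_neg P \<oplus> ec_neg Q"
  using assms
proof (cases rule: ec_add_cases)
  case (line x1 x2 x3 L n)
  with ec_add_line_meets[OF line_meets_reflect[OF line(3)] nonsingular] show ?thesis by simp
qed auto

lemma ec_add_neg_cancel_left:
  assumes "on_E P" "on_E Q" shows "ec_neg P \<oplus> (P \<oplus> Q) = Q"
  using assms
proof (cases rule: ec_add_cases)
  case (line x1 x2 x3 L n)
  have "line_meets A B (-L) (-n) x1 x3 x2"
    using line_meets_reflect[OF line_meets_swap(2)[OF line(3)]] .
  with ec_add_line_meets[OF this nonsingular] show ?thesis using line by simp
qed auto

lemma ec_add_same_x:
  assumes "on_E (Some (x, y))" "on_E (Some (x, y'))" "Some (x, y) \<oplus> Some (x, y') \<noteq> None"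
  shows "y' = y"
proof -
  have "(y' - y) * (y' + y) = 0" using assms(1,2) by (simp add: on_curve_def) algebra
  with assms(3) show ?thesis by (auto simp: ec_add_eq_None_iff add_eq_0_iff2)
qed

lemma ec_add_assoc_affine:
  assumes on: "on_E P" "on_E Q" "on_E R"
    and affine: "P \<noteq> None" "Q \<noteq> None" "R \<noteq> None" "P \<oplus> Q \<noteq> None" "Q \<oplus> R \<noteq> None"
      "(P \<oplus> Q) \<oplus> R \<noteq> None"
  shows "(P \<oplus> Q) \<oplus> R = P \<oplus> (Q \<oplus> R)"
proof -
  obtain x1 y1 x2 y2 x3 y3 x4 y4 x5 y5 x6 y6 where
    P: "P = Some (x1, y1)" and Q: "Q = Some (x2, y2)" and R: "R = Some (x3, y3)"
    and S: "P \<oplus> Q = Some (x4, y4)" and U: "Q \<oplus> R = Some (x5, y5)"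
    and V: "(P \<oplus> Q) \<oplus> R = Some (x6, y6)"
    using affine by (metis option.exhaust surj_pair)
  have S_on: "on_E (Some (x4, y4))" using on_curve_ec_add[OF on(1,2)] S by simp
  obtain L n where l1: "y1 = L*x1 + n" "y2 = L*x2 + n" "y4 = -(L*x4 + n)"
    "line_meets A B L n x1 x2 x4"
    using line_meets_ec_add[of A B x1 y1 x2 y2 x4 y4] on P Q S by auto
  obtain M k where l2: "y2 = M*x2 + k" "y3 = M*x3 + k" "y5 = -(M*x5 + k)"
    "line_meets A B M k x2 x3 x5"
    using line_meets_ec_add[of A B x2 y2 x3 y3 x5 y5] on Q R U by auto
  obtain N j where l3: "y4 = N*x4 + j" "y3 = N*x3 + j" "y6 = -(N*x6 + j)"
    "line_meets A B N j x4 x3 x6"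
    using line_meets_ec_add[of A B x4 y4 x3 y3 x6 y6] on S_on R S V by auto
  have "x3 \<noteq> x4 \<or> x2 \<noteq> x4"
  proof (rule ccontr)
    assume "\<not> (x3 \<noteq> x4 \<or> x2 \<noteq> x4)"
    then have "x4 = x3" "x2 = x3" by auto
    then have "P \<oplus> Q = R" and "Q = R"
      using ec_add_same_x[of x3 y3 y4] ec_add_same_x[of x3 y3 y2] on S_on affine P Q R S
      by (auto simp: ec_add_commute)
    then have "P \<oplus> Q = Q" by simp
    then have "P = ec_neg Q \<oplus> Q"
      using ec_add_neg_cancel_left[OF on(2,1)] ec_add_commute[OF on(1,2)] by simp
    with affine show False by simp
  qed
  moreover have "M*x2 + k = L*x2 + n" "N*x3 + j = M*x3 + k" "N*x4 + j = -(L*x4 + n)"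
    using l1 l2 l3 by simp_all
  ultimately have assoc: "line_meets A B (L+N-M) (-(L+N)*x5 - k) x1 x5 x6"
    "(L+N-M)*x1 + (-(L+N)*x5 - k) = y1" "-((L+N-M)*x6 + (-(L+N)*x5 - k)) = y6"
    using line_meets_assoc[OF l1(4) l2(4) l3(4)] l1 l3 by simp_all
  have "(L+N-M)*x5 + (-(L+N)*x5 - k) = y5" using l2 by (simp add: algebra_simps)
  with ec_add_line_meets[OF assoc(1) nonsingular] have "P \<oplus> (Q \<oplus> R) = Some (x6, y6)"
    unfolding assoc(2,3) P U by simp
  with V show ?thesis by simp
qed

lemma ec_add_assoc:
  assumes on: "on_E P" "on_E Q" "on_E R"
  shows "(P \<oplus> Q) \<oplus> R = P \<oplus> (Q \<oplus> R)"
proof -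
  have PQ: "on_E (P \<oplus> Q)" using on on_curve_ec_add by blast
  consider "P = None \<or> Q = None \<or> R = None" | "P \<oplus> Q = None" | "Q \<oplus> R = None"
    | "(P \<oplus> Q) \<oplus> R = None" | "P \<noteq> None" "Q \<noteq> None" "R \<noteq> None" "P \<oplus> Q \<noteq> None"
      "Q \<oplus> R \<noteq> None" "(P \<oplus> Q) \<oplus> R \<noteq> None"
    by blast
  then show ?thesis
  proof cases
    case 1 then show ?thesis by auto
  next
    case 2
    then show ?thesis
      using ec_add_neg_cancel_left[of "ec_neg P" R] on by (simp add: ec_add_eq_None_iff)
  next
    case 3
    have "ec_neg Q \<oplus> (Q \<oplus> P) = P" using ec_add_neg_cancel_left on by blast
    with 3 show ?thesis using on PQ by (simp add: ec_add_eq_None_iff ec_add_commute)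
  next
    case 4
    have "ec_neg Q \<oplus> (P \<oplus> Q) = P"
      using ec_add_neg_cancel_left[OF on(2,1)] ec_add_commute[OF on(1,2)] by simp
    then have "Q \<oplus> ec_neg (P \<oplus> Q) = ec_neg P"
      using ec_neg_ec_add[of "ec_neg Q" "P \<oplus> Q"] on PQ by simp
    with 4 show ?thesis by (simp add: ec_add_eq_None_iff)
  next
    case 5
    then show ?thesis using ec_add_assoc_affine on by blast
  qed
qed

definition ec_group :: "('a \<times> 'a) option monoid" where
  "ec_group = \<lparr>carrier = {P. on_E P}, monoid.mult = ec_add A, one = None\<rparr>"

lemma ec_group_simps [simp]:
  "carrier ec_group = {P. on_E P}" "monoid.mult ec_group = ec_add A" "one ec_group = None"
  by (simp_all add: ec_group_def)

lemma comm_group_ec_group: "comm_group ec_group"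
proof (rule comm_groupI)
  show "\<exists>Q \<in> carrier ec_group. Q \<otimes>\<^bsub>ec_group\<^esub> P = \<one>\<^bsub>ec_group\<^esub>"
    if "P \<in> carrier ec_group" for P
    using that by (intro bexI[of _ "ec_neg P"]) auto
  show "P \<otimes>\<^bsub>ec_group\<^esub> Q \<otimes>\<^bsub>ec_group\<^esub> R = P \<otimes>\<^bsub>ec_group\<^esub> (Q \<otimes>\<^bsub>ec_group\<^esub> R)"
    if "P \<in> carrier ec_group" "Q \<in> carrier ec_group" "R \<in> carrier ec_group" for P Q R
    using that ec_add_assoc by simp
  show "P \<otimes>\<^bsub>ec_group\<^esub> Q = Q \<otimes>\<^bsub>ec_group\<^esub> P"
    if "P \<in> carrier ec_group" "Q \<in> carrier ec_group" for P Q
    using that ec_add_commute by simp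
qed (simp_all add: on_curve_ec_add)

sublocale ec: comm_group ec_group
  by (rule comm_group_ec_group)

lemma ec_zmul_eq_int_pow:
  assumes "on_E P" shows "ec_zmul A n P = P [^]\<^bsub>ec_group\<^esub> n"
proof -
  have nat_pow: "(ec_add A P ^^ k) None = P [^]\<^bsub>ec_group\<^esub> k" for k
  proof (induction k)
    case (Suc k)
    have "P \<oplus> P [^]\<^bsub>ec_group\<^esub> k = P [^]\<^bsub>ec_group\<^esub> k \<oplus> P"
      using assms ec.nat_pow_closed[of P k] by (intro ec_add_commute) auto
    then show ?case by (simp add: Suc.IH)
  qed simp
  show ?thesis
  proof (cases "0 \<le> n")
    case True
    then show ?thesis by (subst int_pow_def2) (simp add: ec_zmul_def nat_pow)
  next
    case False
    have "ec_neg (P [^]\<^bsub>ec_group\<^esub> nat (- n)) = inv\<^bsub>ec_group\<^esub> (P [^]\<^bsub>ec_group\<^esub> nat (- n))"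
      using assms ec.nat_pow_closed[of P "nat (- n)"] by (intro ec.inv_equality[symmetric]) auto
    with False show ?thesis by (subst int_pow_def2) (simp add: ec_zmul_def nat_pow)
  qed
qed

end

section \<open>Square classes and descent\<close>

lemma is_square_mult_cancel_left_field:
  fixes a b :: "'a::field"
  assumes "is_square a" "a \<noteq> 0"
  shows "is_square (a * b) \<longleftrightarrow> is_square b"
proof
  assume "is_square (a * b)"
  then obtain s where s: "a * b = s^2" by (auto elim: is_nth_powerE)
  obtain t where t: "a = t^2" using assms(1) by (auto elim: is_nth_powerE)
  with assms(2) s have "b = (s/t)^2" by (auto simp: field_simps power2_eq_square)
  then show "is_square b" by (rule is_nth_powerI)
qed (use assms in \<open>auto intro: is_nth_power_mult\<close>)

lemma is_square_mult_square_iff: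
  "c \<noteq> 0 \<Longrightarrow> is_square (a * c^2) \<longleftrightarrow> is_square (a::'a::field)"
  using is_square_mult_cancel_left_field[of "c^2" a] by (simp add: mult.commute)

lemma is_square_mult_cong:
  fixes a b c :: "'a::field"
  assumes "is_square (a * b)" "a \<noteq> 0" "b \<noteq> 0"
  shows "is_square (a * c) \<longleftrightarrow> is_square (b * c)"
proof -
  have "is_square (a * c) \<longleftrightarrow> is_square ((a * b) * (b * c))"
    using assms(3) is_square_mult_square_iff[of b "a * c"] by (simp add: power2_eq_square mult_ac)
  also have "\<dots> \<longleftrightarrow> is_square (b * c)"
    using assms by (simp add: is_square_mult_cancel_left_field)
  finally show ?thesis .
qed

lemma is_square_power_mult_power_iff:
  fixes u v :: "'a::field"
  assumes "u \<noteq> 0" "v \<noteq> 0"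
  shows "is_square (u^m * v^n) \<longleftrightarrow> is_square (u^(m mod 2) * v^(n mod 2))"
proof -
  have split: "w^k = w^(k mod 2) * (w^(k div 2))^2" for w :: 'a and k
    by (metis power_add power_mult mod_div_mult_eq mult.commute)
  have "u^m * v^n = u^(m mod 2) * v^(n mod 2) * (u^(m div 2) * v^(n div 2))^2"
    by (subst (1 2) split) (simp add: power_mult_distrib mult_ac)
  then show ?thesis using assms by (simp add: is_square_mult_square_iff)
qed

lemma (in comm_group) int_pow_mult_self:
  assumes "x \<in> carrier G" "y \<in> carrier G"
  shows "(x [^] a \<otimes> y [^] c) \<otimes> (x [^] a \<otimes> y [^] c) = x [^] (2*a::int) \<otimes> y [^] (2*c::int)"
proof -
  have double: "z [^] k \<otimes> z [^] k = z [^] (2*k)" if "z \<in> carrier G" for z and k :: int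
    using int_pow_mult[OF that, of k k] by (metis mult_2)
  have "(x [^] a \<otimes> y [^] c) \<otimes> (x [^] a \<otimes> y [^] c) = (x [^] a \<otimes> x [^] a) \<otimes> (y [^] c \<otimes> y [^] c)"
    using assms by (simp add: m_ac)
  with assms show ?thesis by (simp add: double)
qed

lemma eq_0_if_all_powers_of_2_dvd:
  fixes k :: int
  assumes "\<And>n. 2^n dvd k" shows "k = 0"
proof (rule ccontr)
  assume "k \<noteq> 0"
  then have "\<bar>2 ^ nat \<bar>k\<bar>\<bar> \<le> \<bar>k\<bar>" using assms dvd_imp_le_int by blast
  moreover have "\<bar>k\<bar> < 2 ^ nat \<bar>k\<bar>"
    using less_exp[of "nat \<bar>k\<bar>"]
    by (metis abs_ge_zero int_nat_eq of_nat_less_iff of_nat_numeral of_nat_power)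
  ultimately show False by linarith
qed

text \<open>A homomorphism from \<open>G\<close> to the square classes \<open>K\<^sup>*/K\<^sup>*\<^sup>2\<close>, given by representatives.\<close>

locale square_class_map = comm_group G for G (structure) +
  fixes \<alpha> :: "'a \<Rightarrow> 'k::field"
  assumes nonzero: "x \<in> carrier G \<Longrightarrow> \<alpha> x \<noteq> 0"
    and mult: "x \<in> carrier G \<Longrightarrow> y \<in> carrier G \<Longrightarrow> is_square (\<alpha> (x \<otimes> y) * \<alpha> x * \<alpha> y)"
begin

lemma is_square_one: "is_square (\<alpha> \<one>)"
  using mult[of \<one> \<one>] nonzero[of \<one>] is_square_mult_square_iff[of "\<alpha> \<one>" "\<alpha> \<one>"]
  by (simp add: power2_eq_square mult.assoc)

lemma is_square_mult_one_iff: "is_square (\<alpha> \<one> * c) \<longleftrightarrow> is_square c"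
  using is_square_one nonzero[of \<one>] by (simp add: is_square_mult_cancel_left_field)

lemma is_square_mult_iff:
  assumes "x \<in> carrier G" "y \<in> carrier G"
  shows "is_square (\<alpha> (x \<otimes> y) * c) \<longleftrightarrow> is_square (\<alpha> x * \<alpha> y * c)"
  using is_square_mult_cong[of "\<alpha> (x \<otimes> y)" "\<alpha> x * \<alpha> y"] mult[OF assms] nonzero assms
  by (simp add: mult.assoc)

lemma is_square_nat_pow_iff:
  assumes "x \<in> carrier G"
  shows "is_square (\<alpha> (x [^] n) * c) \<longleftrightarrow> is_square (\<alpha> x ^ n * c)"
proof (induction n arbitrary: c)
  case 0
  then show ?case by (simp add: is_square_mult_one_iff)
next
  case (Suc n)
  have "is_square (\<alpha> (x [^] Suc n) * c) \<longleftrightarrow> is_square (\<alpha> (x [^] n) * (\<alpha> x * c))"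
    using assms by (simp add: is_square_mult_iff mult.assoc)
  also have "\<dots> \<longleftrightarrow> is_square (\<alpha> x ^ n * (\<alpha> x * c))"
    by (rule Suc.IH)
  also have "\<dots> \<longleftrightarrow> is_square (\<alpha> x ^ Suc n * c)"
    by (simp add: mult_ac)
  finally show ?case .
qed

lemma is_square_inv_iff:
  assumes "x \<in> carrier G"
  shows "is_square (\<alpha> (inv x) * c) \<longleftrightarrow> is_square (\<alpha> x * c)"
proof -
  have "is_square (\<alpha> x * c) \<longleftrightarrow> is_square (\<alpha> x * \<alpha> (inv x) * (\<alpha> (inv x) * c))"
    using nonzero[of "inv x"] assms is_square_mult_square_iff[of "\<alpha> (inv x)" "\<alpha> x * c"]
    by (simp add: power2_eq_square mult_ac)
  also have "\<dots> \<longleftrightarrow> is_square (\<alpha> (inv x) * c)"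
    using assms by (simp add: is_square_mult_iff[symmetric] is_square_mult_one_iff)
  finally show ?thesis ..
qed

lemma is_square_int_pow_iff:
  assumes "x \<in> carrier G"
  shows "is_square (\<alpha> (x [^] i) * c) \<longleftrightarrow> is_square (\<alpha> x ^ nat \<bar>i\<bar> * c)"
proof (cases "i < 0")
  case True
  then have "is_square (\<alpha> (x [^] i) * c) \<longleftrightarrow> is_square (\<alpha> (inv (x [^] nat (- i))) * c)"
    by (simp only: int_pow_def2 if_True)
  also have "\<dots> \<longleftrightarrow> is_square (\<alpha> x ^ nat (- i) * c)"
    using assms by (simp add: is_square_inv_iff is_square_nat_pow_iff)
  finally show ?thesis using True by simp
next
  case False
  then have eq: "x [^] i = x [^] nat i" by (simp only: int_pow_def2 if_False)
  show ?thesis unfolding eq is_square_nat_pow_iff[OF assms] using False by simp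
qed

lemma even_if_is_square:
  assumes PH: "P \<in> carrier G" "H \<in> carrier G"
    and independent: "\<not> is_square (\<alpha> P)" "\<not> is_square (\<alpha> H)" "\<not> is_square (\<alpha> P * \<alpha> H)"
    and "is_square (\<alpha> (P [^] (a::int) \<otimes> H [^] (c::int)))"
  shows "even a \<and> even c"
proof -
  have "P [^] a \<in> carrier G" "H [^] c \<in> carrier G" using PH by auto
  then have "is_square (\<alpha> (P [^] a) * \<alpha> (H [^] c) * 1)"
    using is_square_mult_iff[of "P [^] a" "H [^] c" 1] assms(6) by simp
  then have "is_square (\<alpha> (H [^] c) * \<alpha> P ^ nat \<bar>a\<bar>)"
    using PH by (simp add: is_square_int_pow_iff mult.commute)
  then have "is_square (\<alpha> H ^ nat \<bar>c\<bar> * \<alpha> P ^ nat \<bar>a\<bar>)"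
    using PH by (simp add: is_square_int_pow_iff)
  then have "is_square (\<alpha> P ^ nat \<bar>a\<bar> * \<alpha> H ^ nat \<bar>c\<bar>)"
    by (simp add: mult.commute)
  then have "is_square (\<alpha> P ^ (nat \<bar>a\<bar> mod 2) * \<alpha> H ^ (nat \<bar>c\<bar> mod 2))"
    using is_square_power_mult_power_iff[OF nonzero[OF PH(1)] nonzero[OF PH(2)]] by blast
  moreover have "nat \<bar>k\<bar> mod 2 = (if even k then 0 else 1)" for k :: int
  proof -
    have "even (nat \<bar>k\<bar>) \<longleftrightarrow> even k" by (simp add: even_nat_iff)
    then show ?thesis by (auto simp: mod2_eq_if)
  qed
  ultimately show ?thesis using independent by (auto split: if_splits)
qed

context
  fixes P H T
  assumes P: "P \<in> carrier G" and H: "H \<in> carrier G"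
    and independent: "\<not> is_square (\<alpha> P)" "\<not> is_square (\<alpha> H)" "\<not> is_square (\<alpha> P * \<alpha> H)"
    and two_torsion: "\<And>X. X \<in> carrier G \<Longrightarrow> X \<otimes> X = \<one> \<Longrightarrow> X = \<one> \<or> X = T"
    and is_square_T: "is_square (\<alpha> T)"
    and T_not_double: "\<And>Y. Y \<in> carrier G \<Longrightarrow> Y \<otimes> Y \<noteq> T"
begin

lemma halve_exponents:
  assumes "is_square (\<alpha> (P [^] (a::int) \<otimes> H [^] (c::int)))"
  obtains a' c' where "a = 2*a'" "c = 2*c'"
  using even_if_is_square[OF P H independent assms] by (auto elim!: evenE)

lemma relation_halves:
  assumes rel: "P [^] (a::int) \<otimes> H [^] (c::int) = \<one>"
  shows "\<exists>a' c'. a = 2*a' \<and> c = 2*c' \<and> P [^] a' \<otimes> H [^] c' = \<one>"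
proof -
  obtain a' c' where ac: "a = 2*a'" "c = 2*c'"
    by (rule halve_exponents[of a c]) (simp add: rel is_square_one)
  define X where "X = P [^] a' \<otimes> H [^] c'"
  have "X \<in> carrier G" unfolding X_def using P H by simp
  moreover have "X \<otimes> X = \<one>"
    unfolding X_def int_pow_mult_self[OF P H] ac(1,2)[symmetric] by (rule rel)
  ultimately have "X = \<one> \<or> X = T" by (rule two_torsion)
  moreover have "X \<noteq> T"
  proof
    assume "X = T"
    obtain a'' c'' where "a' = 2*a''" "c' = 2*c''"
      by (rule halve_exponents[of a' c']) (use is_square_T \<open>X = T\<close> X_def in simp)
    then have "(P [^] a'' \<otimes> H [^] c'') \<otimes> (P [^] a'' \<otimes> H [^] c'') = T"
      unfolding int_pow_mult_self[OF P H] \<open>X = T\<close>[symmetric] X_def by simp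
    with T_not_double[of "P [^] a'' \<otimes> H [^] c''"] P H show False by simp
  qed
  ultimately have "P [^] a' \<otimes> H [^] c' = \<one>" unfolding X_def by blast
  with ac show ?thesis by blast
qed

theorem independent_by_descent:
  assumes "P [^] (a::int) \<otimes> H [^] (c::int) = \<one>"
  shows "a = 0 \<and> c = 0"
proof -
  have "2^n dvd a \<and> 2^n dvd c" if "P [^] a \<otimes> H [^] c = \<one>" for n and a c :: int
    using that
  proof (induction n arbitrary: a c)
    case (Suc n)
    then obtain a' c' where "a = 2*a'" "c = 2*c'" "P [^] a' \<otimes> H [^] c' = \<one>"
      using relation_halves by blast
    with Suc.IH[of a' c'] show ?case by (simp add: mult_dvd_mono)
  qed simp
  then show ?thesis using assms eq_0_if_all_powers_of_2_dvd by blast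
qed

end

end

section \<open>2-descent on a curve with a rational 2-torsion point\<close>

locale weierstrass_2torsion = weierstrass_curve +
  fixes e0 :: 'a
  assumes root: "e0^3 + A*e0 + B = 0"
begin

lemma derivative_at_root_nonzero: "3*e0^2 + A \<noteq> 0"
proof
  assume "3*e0^2 + A = 0"
  with root have "4*A^3 + 27*B^2 = 0" by algebra
  with nonsingular show False by (simp add: nonsingular_def)
qed

text \<open>The 2-descent map for \<open>T = (e0, 0)\<close>: \<open>x - e0\<close>, read modulo squares, except at \<open>T\<close>
  itself, which goes to \<open>f'(e0) = 3 e0^2 + A\<close>, the product of its differences to the other roots.\<close>

definition descent_x :: "'a \<Rightarrow> 'a" where
  "descent_x x = (if x = e0 then 3*e0^2 + A else x - e0)"

definition descent_map :: "('a \<times> 'a) option \<Rightarrow> 'a" where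
  "descent_map P = (case P of None \<Rightarrow> 1 | Some (x, _) \<Rightarrow> descent_x x)"

lemma descent_x_nonzero: "descent_x x \<noteq> 0"
  using derivative_at_root_nonzero by (simp add: descent_x_def)

lemma descent_map_nonzero: "descent_map P \<noteq> 0"
  using descent_x_nonzero by (simp add: descent_map_def split: option.split)

lemma line_meets_not_tangent_at_root: "\<not> line_meets A B L n e0 e0 x"
proof
  assume meets: "line_meets A B L n e0 e0 x"
  have "(L*e0 + n)^2 = 0" using line_meets_on_curve(1)[OF meets] root by simp
  then have "4*A^3 + 27*B^2 = 0" using line_meets_tangent_on_x_axis_singular[OF meets] by simp
  with nonsingular show False by (simp add: nonsingular_def)
qed

lemma line_meets_through_root:
  assumes "line_meets A B L n x1 x2 e0"
  shows "(x1 - e0) * (x2 - e0) = 3*e0^2 + A"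
proof -
  have "(L*e0 + n)^2 = 0" using line_meets_on_curve(3)[OF assms] root by simp
  then have "n = -L*e0" by (simp add: algebra_simps add_eq_0_iff2)
  with assms root show ?thesis unfolding line_meets_def by algebra
qed

lemma is_square_descent_x_line_meets:
  assumes meets: "line_meets A B L n x1 x2 x3"
  shows "is_square (descent_x x1 * descent_x x2 * descent_x x3)"
proof -
  have off_root: "is_square (descent_x y1 * descent_x y2 * descent_x y3)"
    if meets: "line_meets A B L n y1 y2 y3" and "y1 \<noteq> e0" "y2 \<noteq> e0" for y1 y2 y3
  proof (cases "y3 = e0")
    case True
    then have "descent_x y1 * descent_x y2 * descent_x y3 = (3*e0^2 + A)^2"
      using line_meets_through_root[of L n y1 y2] meets that(2,3)
      by (simp add: descent_x_def power2_eq_square)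
    then show ?thesis by (simp add: is_nth_powerI)
  next
    case False
    have "(y1 - e0) * (y2 - e0) * (y3 - e0) = (L*e0 + n)^2"
      using meets root unfolding line_meets_def by algebra
    with False that(2,3) show ?thesis by (simp add: descent_x_def is_nth_powerI)
  qed
  consider "x1 \<noteq> e0" "x2 \<noteq> e0" | "x1 = e0" "x2 \<noteq> e0" "x3 \<noteq> e0"
    | "x2 = e0" "x1 \<noteq> e0" "x3 \<noteq> e0"
    using line_meets_not_tangent_at_root line_meets_swap meets by metis
  then show ?thesis
  proof cases
    case 1
    then show ?thesis using off_root[OF meets] by blast
  next
    case 2
    have "line_meets A B L n x2 x3 x1" using meets line_meets_swap by blast
    with 2 have "is_square (descent_x x2 * descent_x x3 * descent_x x1)" using off_root by blast
    then show ?thesis by (simp add: mult_ac)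
  next
    case 3
    have "line_meets A B L n x1 x3 x2" using meets line_meets_swap by blast
    with 3 have "is_square (descent_x x1 * descent_x x3 * descent_x x2)" using off_root by blast
    then show ?thesis by (simp add: mult_ac)
  qed
qed

lemma is_square_descent_map_ec_add:
  assumes "on_E P" "on_E Q"
  shows "is_square (descent_map (P \<oplus> Q) * descent_map P * descent_map Q)"
  using assms
proof (cases rule: ec_add_cases)
  case (line x1 x2 x3 L n)
  then show ?thesis
    using is_square_descent_x_line_meets[OF line(3)] by (simp add: descent_map_def mult_ac)
next
  case inverse
  then show ?thesis by (cases P) (auto simp: descent_map_def is_nth_powerI power2_eq_square)
qed (auto simp: descent_map_def is_nth_powerI power2_eq_square)

sublocale descent: square_class_map ec_group descent_map
  by unfold_locales (simp_all add: descent_map_nonzero is_square_descent_map_ec_add)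

lemma descent_map_Some: "x \<noteq> e0 \<Longrightarrow> descent_map (Some (x, y)) = x - e0"
  by (simp add: descent_map_def descent_x_def)

text \<open>\<open>-3 e0^2 - 4 A\<close> is the discriminant of \<open>f(x) / (x - e0)\<close>.\<close>

lemma ec_2torsion:
  assumes "\<not> is_square (-3*e0^2 - 4*A)" "on_E X" "X \<oplus> X = None"
  shows "X = None \<or> X = Some (e0, 0)"
proof (cases X)
  case (Some p)
  obtain x y where X: "X = Some (x, y)" using Some by (cases p) auto
  then have "y = 0" using assms(3) by (simp add: ec_add_eq_None_iff)
  with X assms(2) have "x^3 + A*x + B = 0" by (simp add: on_curve_def)
  then have "(x - e0) * (x^2 + e0*x + e0^2 + A) = 0" using root by algebra
  moreover have "x^2 + e0*x + e0^2 + A \<noteq> 0"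
  proof
    assume "x^2 + e0*x + e0^2 + A = 0"
    then have "-3*e0^2 - 4*A = (2*x + e0)^2" by algebra
    with assms(1) show False by (simp add: is_nth_powerI)
  qed
  ultimately show ?thesis using X \<open>y = 0\<close> by simp
qed simp

text \<open>If \<open>2 Y = T\<close> then the tangent at \<open>Y = (x, y)\<close> passes through \<open>T\<close>, so
  \<open>(x - e0)^2 = f'(e0)\<close> and its squared slope is \<open>3 e0 + 2 (x - e0)\<close>.\<close>

lemma root_not_double:
  assumes "3*e0^2 + A = \<beta>^2" "\<not> is_square (3*e0 + 2*\<beta>)" "\<not> is_square (3*e0 - 2*\<beta>)"
    and "on_E Y"
  shows "Y \<oplus> Y \<noteq> Some (e0, 0)"
proof
  assume double: "Y \<oplus> Y = Some (e0, 0)"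
  then obtain x y where Y: "Y = Some (x, y)" by (cases Y) auto
  with assms(4) double obtain L n where "0 = -(L*e0 + n)" and meets: "line_meets A B L n x x e0"
    using line_meets_ec_add[of A B x y x y e0 0] by auto
  have "(x - e0)^2 = \<beta>^2"
    using line_meets_through_root[OF meets] assms(1) by (simp add: power2_eq_square)
  then have "x - e0 = \<beta> \<or> x - e0 = -\<beta>" by (simp add: power2_eq_iff)
  moreover have L2: "L^2 = 3*e0 + 2*(x - e0)" using meets unfolding line_meets_def by simp
  ultimately have "3*e0 + 2*\<beta> = L^2 \<or> 3*e0 - 2*\<beta> = L^2"
    by (elim disjE) (use L2 in algebra)+
  with assms(2,3) show False by (metis is_nth_powerI)
qed

theorem ec_independent_by_2_descent:
  assumes "3*e0^2 + A = \<beta>^2" "\<not> is_square (3*e0 + 2*\<beta>)" "\<not> is_square (3*e0 - 2*\<beta>)"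
    and "\<not> is_square (-3*e0^2 - 4*A)"
    and on: "on_E (Some (xP, yP))" "on_E (Some (xH, yH))"
    and independent: "\<not> is_square (xP - e0)" "\<not> is_square (xH - e0)"
      "\<not> is_square ((xP - e0) * (xH - e0))"
    and rel: "ec_add A (ec_zmul A a (Some (xP, yP))) (ec_zmul A b (Some (xH, yH))) = None"
  shows "a = 0 \<and> b = 0"
proof (rule descent.independent_by_descent)
  have "xP \<noteq> e0" "xH \<noteq> e0" using independent(1,2) by auto
  then show "\<not> is_square (descent_map (Some (xP, yP)))" "\<not> is_square (descent_map (Some (xH, yH)))"
    "\<not> is_square (descent_map (Some (xP, yP)) * descent_map (Some (xH, yH)))"
    using independent by (simp_all add: descent_map_Some)
  show "is_square (descent_map (Some (e0, 0)))"
    using assms(1) by (simp add: descent_map_def descent_x_def is_nth_powerI)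
  show "X = \<one>\<^bsub>ec_group\<^esub> \<or> X = Some (e0, 0)"
    if "X \<in> carrier ec_group" "X \<otimes>\<^bsub>ec_group\<^esub> X = \<one>\<^bsub>ec_group\<^esub>" for X
    using ec_2torsion[OF assms(4)] that by simp
  show "Y \<otimes>\<^bsub>ec_group\<^esub> Y \<noteq> Some (e0, 0)" if "Y \<in> carrier ec_group" for Y
    using root_not_double[OF assms(1-3)] that by simp
  show "Some (xP, yP) [^]\<^bsub>ec_group\<^esub> a \<otimes>\<^bsub>ec_group\<^esub> Some (xH, yH) [^]\<^bsub>ec_group\<^esub> b
      = \<one>\<^bsub>ec_group\<^esub>"
    using rel on by (simp add: ec_zmul_eq_int_pow)
qed (use on in simp_all)

end

section \<open>Specialization of rational functions in two variables\<close>

instance fract :: ("{idom,ring_char_0}") ring_char_0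
  by standard (auto intro!: injI simp: of_nat_fract eq_fract)

definition initial_coeff :: "'a \<Rightarrow> 'a::idom_divide poly \<Rightarrow> 'a" where
  "initial_coeff a p = poly (p div [:-a, 1:] ^ order a p) a"

lemma initial_coeff_eq:
  assumes "p = [:-a, 1:] ^ order a p * r"
  shows "initial_coeff a p = poly r a"
proof -
  define t where "t = [:-a, 1:] ^ order a p"
  have "t \<noteq> 0" "p = t * r" using assms unfolding t_def by simp_all
  then show ?thesis unfolding initial_coeff_def t_def[symmetric] by simp
qed

lemma initial_coeff_factor:
  obtains r where "p = [:-a, 1:] ^ order a p * r" "initial_coeff a p = poly r a"
  using order_1[of a p] initial_coeff_eq by (metis dvd_def)

lemma initial_coeff_nonzero:
  assumes "p \<noteq> 0" shows "initial_coeff a p \<noteq> 0"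
proof
  assume "initial_coeff a p = 0"
  then obtain r where r: "p = [:-a, 1:] ^ order a p * r" "poly r a = 0"
    using initial_coeff_factor by metis
  then obtain s where "r = [:-a, 1:] * s" by (auto simp: poly_eq_0_iff_dvd elim: dvdE)
  with r have "p = [:-a, 1:] ^ Suc (order a p) * s" by (simp only: power_Suc2 mult.assoc)
  with order_2[OF assms] show False by (metis dvd_triv_left)
qed

lemma initial_coeff_mult:
  assumes "p \<noteq> 0" "q \<noteq> 0"
  shows "initial_coeff a (p * q) = initial_coeff a p * initial_coeff a q"
proof -
  obtain r s where r: "p = [:-a, 1:] ^ order a p * r" "initial_coeff a p = poly r a"
    and s: "q = [:-a, 1:] ^ order a q * s" "initial_coeff a q = poly s a"
    using initial_coeff_factor by metis
  have "p * q = [:-a, 1:] ^ order a (p * q) * (r * s)"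
    using assms by (subst r(1), subst s(1)) (simp add: order_mult power_add mult_ac)
  then show ?thesis using r s by (simp add: initial_coeff_eq)
qed

lemma initial_coeff_eq_poly: "poly p a \<noteq> 0 \<Longrightarrow> initial_coeff a p = poly p a"
  by (rule initial_coeff_eq) (simp add: order_0I)

text \<open>Points \<open>z = (m0, u0)\<close> are given in the order of the variables of \<open>Qmu\<close>:
  the inner variable \<open>m\<close> first, the outer variable \<open>u\<close> second.\<close>

definition poly2 :: "'a::comm_ring_1 poly poly \<Rightarrow> 'a \<times> 'a \<Rightarrow> 'a" where
  "poly2 p z = poly (poly p [:snd z:]) (fst z)"

lemma poly2_simps [simp]:
  "poly2 (p + q) z = poly2 p z + poly2 q z" "poly2 (p * q) z = poly2 p z * poly2 q z"
  "poly2 (- r) z = - poly2 r z" "poly2 (r - s) z = poly2 r z - poly2 s z"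
  "poly2 0 z = 0" "poly2 1 z = 1" "poly2 (numeral k) z = numeral k"
  by (simp_all add: poly2_def)

definition initial_coeff2 :: "'a \<times> 'a \<Rightarrow> 'a::idom_divide poly poly \<Rightarrow> 'a" where
  "initial_coeff2 z p = initial_coeff (fst z) (initial_coeff [:snd z:] p)"

lemma initial_coeff2_nonzero: "p \<noteq> 0 \<Longrightarrow> initial_coeff2 z p \<noteq> 0"
  by (simp add: initial_coeff2_def initial_coeff_nonzero)

lemma initial_coeff2_mult:
  "p \<noteq> 0 \<Longrightarrow> q \<noteq> 0 \<Longrightarrow> initial_coeff2 z (p * q) = initial_coeff2 z p * initial_coeff2 z q"
  by (simp add: initial_coeff2_def initial_coeff_mult initial_coeff_nonzero)

lemma initial_coeff2_eq_poly2:
  assumes "poly2 p z \<noteq> 0" shows "initial_coeff2 z p = poly2 p z"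
proof -
  have "poly p [:snd z:] \<noteq> 0" using assms by (auto simp: poly2_def)
  with assms show ?thesis by (simp add: initial_coeff2_def poly2_def initial_coeff_eq_poly)
qed

definition specializes_to :: "'a::field poly poly fract \<Rightarrow> 'a \<times> 'a \<Rightarrow> 'a \<Rightarrow> bool" where
  "specializes_to f z c \<longleftrightarrow> (\<exists>N D. f = Fract N D \<and> poly2 D z \<noteq> 0 \<and> poly2 N z = c * poly2 D z)"

lemma specializes_to_const:
  "specializes_to (Fract p 1) z (poly2 p z)"
  unfolding specializes_to_def by (intro exI[of _ p] exI[of _ 1]) simp

lemma specializes_to_mvar: "specializes_to mvar (m0, u0) m0"
  using specializes_to_const[of "[:[:0, 1:]:]" "(m0, u0)"] by (simp add: mvar_def poly2_def)

lemma specializes_to_uvar: "specializes_to uvar (m0, u0) u0"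
  using specializes_to_const[of "[:0, 1:]" "(m0, u0)"] by (simp add: uvar_def poly2_def)

lemma specializes_to_one: "specializes_to 1 z 1"
  using specializes_to_const[of 1 z] by (simp add: One_fract_def)

lemma specializes_to_numeral: "specializes_to (numeral k) z (numeral k)"
  using specializes_to_const[of "numeral k" z] by (metis of_nat_fract of_nat_numeral poly2_simps(7))

lemma specializes_to_add:
  assumes "specializes_to f z a" "specializes_to g z b"
  shows "specializes_to (f + g) z (a + b)"
proof -
  obtain N1 D1 N2 D2 where h: "f = Fract N1 D1" "poly2 D1 z \<noteq> 0" "poly2 N1 z = a * poly2 D1 z"
    "g = Fract N2 D2" "poly2 D2 z \<noteq> 0" "poly2 N2 z = b * poly2 D2 z"
    using assms unfolding specializes_to_def by blast
  then have "D1 \<noteq> 0" "D2 \<noteq> 0" by auto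
  with h show ?thesis unfolding specializes_to_def
    by (intro exI[of _ "N1 * D2 + N2 * D1"] exI[of _ "D1 * D2"]) (simp add: algebra_simps)
qed

lemma specializes_to_mult:
  assumes "specializes_to f z a" "specializes_to g z b"
  shows "specializes_to (f * g) z (a * b)"
proof -
  obtain N1 D1 N2 D2 where h: "f = Fract N1 D1" "poly2 D1 z \<noteq> 0" "poly2 N1 z = a * poly2 D1 z"
    "g = Fract N2 D2" "poly2 D2 z \<noteq> 0" "poly2 N2 z = b * poly2 D2 z"
    using assms unfolding specializes_to_def by blast
  then show ?thesis unfolding specializes_to_def
    by (intro exI[of _ "N1 * N2"] exI[of _ "D1 * D2"]) simp
qed

lemma specializes_to_uminus:
  assumes "specializes_to f z a" shows "specializes_to (- f) z (- a)"
  using assms unfolding specializes_to_def by (metis minus_fract mult_minus_left poly2_simps(3))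

lemma specializes_to_diff:
  "specializes_to f z a \<Longrightarrow> specializes_to g z b \<Longrightarrow> specializes_to (f - g) z (a - b)"
  using specializes_to_add[of f z a "- g" "- b"] specializes_to_uminus[of g z b] by simp

lemma specializes_to_divide:
  assumes "specializes_to f z a" "specializes_to g z b" "b \<noteq> 0"
  shows "specializes_to (f / g) z (a / b)"
proof -
  obtain N1 D1 N2 D2 where h: "f = Fract N1 D1" "poly2 D1 z \<noteq> 0" "poly2 N1 z = a * poly2 D1 z"
    "g = Fract N2 D2" "poly2 D2 z \<noteq> 0" "poly2 N2 z = b * poly2 D2 z"
    using assms unfolding specializes_to_def by blast
  then have "D1 \<noteq> 0" "D2 \<noteq> 0" by auto
  with h assms(3) show ?thesis unfolding specializes_to_def
    by (intro exI[of _ "N1 * D2"] exI[of _ "D1 * N2"]) (simp add: field_simps)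
qed

lemma specializes_to_power:
  "specializes_to f z a \<Longrightarrow> specializes_to (f ^ n) z (a ^ n)"
  by (induction n) (simp_all add: specializes_to_mult specializes_to_one)

lemma specializes_to_eq_value: "specializes_to f z c \<Longrightarrow> c = d \<Longrightarrow> specializes_to f z d"
  by simp

lemmas specializes_to_intros = specializes_to_mvar specializes_to_uvar specializes_to_one
  specializes_to_numeral
  specializes_to_add specializes_to_mult specializes_to_uminus specializes_to_diff
  specializes_to_divide specializes_to_power

lemma nonzero_if_specializes_to:
  assumes "specializes_to f z c" "c \<noteq> 0" shows "f \<noteq> 0"
proof
  assume "f = 0"
  obtain N D where h: "f = Fract N D" "poly2 D z \<noteq> 0" "poly2 N z = c * poly2 D z"
    using assms(1) unfolding specializes_to_def by blast
  then have "D \<noteq> 0" by auto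
  with h \<open>f = 0\<close> have "N = 0" by (simp add: eq_fract Zero_fract_def)
  with h assms(2) show False by simp
qed

text \<open>From \<open>N r^2 = p^2 D\<close>, applying the multiplicative map \<open>initial_coeff2 z\<close>, which agrees
  with evaluation at \<open>z\<close> where that is nonzero, exhibits \<open>c\<close> as a square.\<close>

lemma not_square_if_specializes_to:
  assumes "specializes_to f z c" "c \<noteq> 0" "\<not> is_square c"
  shows "\<not> is_square f"
proof
  assume "is_square f"
  then obtain g where g: "f = g^2" by (auto elim: is_nth_powerE)
  obtain N D where h: "f = Fract N D" "poly2 D z \<noteq> 0" "poly2 N z = c * poly2 D z"
    using assms(1) unfolding specializes_to_def by blast
  obtain p r where pr: "g = Fract p r" "r \<noteq> 0" by (cases g)
  have D: "D \<noteq> 0" and N: "poly2 N z \<noteq> 0" using h assms(2) by auto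
  have "N * r^2 = p^2 * D"
    using g h pr D by (simp add: power2_eq_square eq_fract)
  moreover have "p \<noteq> 0" using calculation N pr(2) D by auto
  ultimately have
    "initial_coeff2 z N * (initial_coeff2 z r)^2 = (initial_coeff2 z p)^2 * initial_coeff2 z D"
    using N pr(2) D by (metis initial_coeff2_mult power2_eq_square mult_eq_0_iff poly2_simps(5))
  with h N have "c = (initial_coeff2 z p / initial_coeff2 z r)^2"
    using initial_coeff2_nonzero[OF pr(2)] by (simp add: initial_coeff2_eq_poly2 field_simps)
  with assms(3) show False by (simp add: is_nth_powerI)
qed

lemma not_square_if_negative: "(c::'a::linordered_idom) < 0 \<Longrightarrow> \<not> is_square c"
  by (auto elim: is_nth_powerE)

lemma rat_of_nat_is_square_iff: "is_square (of_nat n :: rat) \<longleftrightarrow> is_square n"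
proof
  assume "is_square (of_nat n :: rat)"
  then obtain r :: rat where r: "of_nat n = r^2" by (auto elim: is_nth_powerE)
  obtain a b where ab: "r = Rat.Fract a b" "b > 0" "coprime a b" by (cases r)
  then have "Rat.Fract (a^2) (b^2) = Rat.Fract (int n) 1"
    using r by (simp add: power2_eq_square of_nat_rat)
  then have eq: "a^2 = int n * b^2" using ab by (simp add: eq_rat)
  have "coprime (a^2) (b^2)" using ab by simp
  moreover have "b^2 dvd a^2" using eq by simp
  ultimately have "is_unit (b^2)" by (metis coprime_absorb_right)
  then have "b^2 = 1" using ab by simp
  with eq have "int n = (int (nat \<bar>a\<bar>))^2" by simp
  then show "is_square n" by (metis is_nth_powerI of_nat_eq_iff of_nat_power)
qed (auto elim: is_nth_powerE)

lemma not_square_between_squares: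
  assumes "b^2 < n" "n < (Suc b)^2" shows "\<not> is_square (n::nat)"
proof
  assume "is_square n"
  then obtain k where k: "n = k^2" by (auto elim: is_nth_powerE)
  with assms have "b < k" "k < Suc b"
    using power_less_imp_less_base[of b 2 k] power_less_imp_less_base[of k 2 "Suc b"] by simp_all
  then show False by simp
qed

lemma rat_numeral_not_square:
  "b^2 < numeral k \<Longrightarrow> numeral k < (Suc b)^2 \<Longrightarrow> \<not> is_square (numeral k :: rat)"
  using not_square_between_squares rat_of_nat_is_square_iff[of "numeral k"] by simp

section \<open>The family \<open>E_{m,q}\<close> over \<open>Q(m, u)\<close>\<close>

definition torsion_x :: "'a::field \<Rightarrow> 'a \<Rightarrow> 'a" where
  "torsion_x m q = ((m^2 + 1)*q^2 + 2*m*q + 2) / 3"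

lemma torsion_x_root:
  fixes m q :: "'a::field_char_0"
  shows "torsion_x m q ^ 3 + EA m q * torsion_x m q + EB m q = 0"
  unfolding torsion_x_def EA_def EB_def by (simp add: field_simps) algebra

lemma torsion_x_derivative:
  fixes m q :: "'a::field_char_0"
  shows "3 * torsion_x m q ^ 2 + EA m q = (m*q + 1)^2"
  unfolding torsion_x_def EA_def by (simp add: field_simps) algebra

lemma on_curve_Ppt:
  fixes m q :: "'a::field_char_0"
  shows "on_curve (EA m q) (EB m q) (Ppt m q)"
  unfolding on_curve_def Ppt_def EA_def EB_def by (simp add: field_simps) algebra

text \<open>With \<open>q = 2 w / D\<close>, clearing the denominators \<open>3 D^2\<close> of \<open>x\<close> and \<open>D^2\<close> of \<open>y\<close> turns the
  curve equation into a polynomial identity in \<open>m, u\<close>.\<close>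

lemma on_curve_Hpt:
  fixes m u :: "'a::field_char_0"
  assumes D: "1 + m^2 - u^2 \<noteq> 0"
  defines "q \<equiv> 2*(u - m) / (1 + m^2 - u^2)"
  shows "on_curve (EA m q) (EB m q) (Hpt m u)"
proof -
  define D where "D = 1 + m^2 - u^2"
  define w where "w = u - m"
  have "D \<noteq> 0" using assms by (simp add: D_def)
  have q: "q = 2*w/D" unfolding q_def D_def w_def ..
  define NA where "NA = -((m*m + 1)^2*16*w^4 + 4*m*(m*m + 1)*8*w^3*D + (5*m*m + 4)*4*w*w*D*D
    + 2*m*2*w*D^3 + D^4)"
  define NB1 where "NB1 = 2*(m*m + 1)^2*16*w^4 + 8*m*(m*m + 1)*8*w^3*D + (7*m*m + 8)*4*w*w*D*D
    - 2*m*2*w*D^3 - D^4"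
  define NB2 where "NB2 = (m*m + 1)*4*w*w + 2*m*2*w*D + 2*D*D"
  define NX where "NX = 5*m^4 + (6 - 10*u)*m^3 + (4*u^2 - 6*u + 10)*m^2
    + 2*(u^3 - 3*u^2 - 5*u + 3)*m - u^4 + 6*u^3 - 6*u + 5"
  define NY where "NY = 2*(m - u + 1)^2*(m^2 - u*m + 1)"
  have A: "EA m q = NA / (3*D^4)"
    unfolding EA_def q NA_def using \<open>D \<noteq> 0\<close> by (simp add: field_simps) algebra
  have B: "EB m q = NB1*NB2 / (27*D^6)"
    unfolding EB_def q NB1_def NB2_def using \<open>D \<noteq> 0\<close> by (simp add: field_simps) algebra
  have H: "Hpt m u = Some (NX / (3*D^2), NY / D^2)"
    unfolding Hpt_def NX_def NY_def D_def by (simp add: algebra_simps)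
  have "27*NY^2*D^2 = NX^3 + 3*NA*NX + NB1*NB2"
    unfolding NX_def NY_def NA_def NB1_def NB2_def D_def w_def by algebra
  then have "(NY/D^2)^2 = (NX/(3*D^2))^3 + NA/(3*D^4) * (NX/(3*D^2)) + NB1*NB2/(27*D^6)"
    using \<open>D \<noteq> 0\<close> by (simp add: field_simps) algebra
  then show ?thesis unfolding on_curve_def H A B by simp
qed

definition P_x :: "'a::field \<Rightarrow> 'a \<Rightarrow> 'a" where
  "P_x m q = - ((2*m^2 - 1)*q^2 + 4*m*q + 1) / 3"

definition H_x :: "'a::field \<Rightarrow> 'a \<Rightarrow> 'a" where
  "H_x m u = (5*m^4 + (6 - 10*u)*m^3 + (4*u^2 - 6*u + 10)*m^2 + 2*(u^3 - 3*u^2 - 5*u + 3)*m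
    - u^4 + 6*u^3 - 6*u + 5) / (3 * (m^2 - u^2 + 1)^2)"

lemma Ppt_eq: "Ppt m q = Some (P_x m q, q * (m*q + 1)^2)"
  by (simp add: Ppt_def P_x_def)

lemma Hpt_eq: "Hpt m u = Some (H_x m u, 2*(m - u + 1)^2*(m^2 - u*m + 1) / (m^2 - u^2 + 1)^2)"
  by (simp add: Hpt_def H_x_def)

definition qmu :: Qmu where
  "qmu = 2 * (uvar - mvar) / (1 + mvar^2 - uvar^2)"

lemma specializes_to_qmu: "specializes_to qmu (1, -2) 3"
  unfolding qmu_def by (rule specializes_to_eq_value, (rule specializes_to_intros | simp)+)

lemma Qmu_specializations:
  "specializes_to (1 + mvar^2 - uvar^2) (1, -2) (-2)"
  "specializes_to (4 * EA mvar qmu ^ 3 + 27 * EB mvar qmu ^ 2) (1, -2) (-156672)"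
  "specializes_to (3 * torsion_x mvar qmu + 2 * (mvar*qmu + 1)) (1, -2) 34"
  "specializes_to (3 * torsion_x mvar qmu - 2 * (mvar*qmu + 1)) (1, -2) 18"
  "specializes_to (-3 * torsion_x mvar qmu ^ 2 - 4 * EA mvar qmu) (1, -2) 612"
  "specializes_to (P_x mvar qmu - torsion_x mvar qmu) (1, -2) (-16)"
  "specializes_to (H_x mvar uvar - torsion_x mvar qmu) (1, -2) (-8)"
  unfolding EA_def EB_def torsion_x_def P_x_def H_x_def
  by (rule specializes_to_eq_value,
      (rule specializes_to_intros specializes_to_qmu | simp add: power_divide)+)+

lemma Qmu_denominator_nonzero: "1 + mvar^2 - uvar^2 \<noteq> 0"
  using nonzero_if_specializes_to[OF Qmu_specializations(1)] by simp

lemma Qmu_nonsingular: "nonsingular (EA mvar qmu) (EB mvar qmu)"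
  using nonzero_if_specializes_to[OF Qmu_specializations(2)] by (simp add: nonsingular_def)

lemma Qmu_not_squares:
  "\<not> is_square (3 * torsion_x mvar qmu + 2 * (mvar*qmu + 1))"
  "\<not> is_square (3 * torsion_x mvar qmu - 2 * (mvar*qmu + 1))"
  "\<not> is_square (-3 * torsion_x mvar qmu ^ 2 - 4 * EA mvar qmu)"
  "\<not> is_square (P_x mvar qmu - torsion_x mvar qmu)"
  "\<not> is_square (H_x mvar uvar - torsion_x mvar qmu)"
  "\<not> is_square ((P_x mvar qmu - torsion_x mvar qmu) * (H_x mvar uvar - torsion_x mvar qmu))"
proof -
  have rat: "\<not> is_square (34 :: rat)" "\<not> is_square (18 :: rat)" "\<not> is_square (612 :: rat)"
    "\<not> is_square (128 :: rat)" "\<not> is_square (-16 :: rat)" "\<not> is_square (-8 :: rat)"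
    using rat_numeral_not_square[of 5] rat_numeral_not_square[of 4]
      rat_numeral_not_square[of 24] rat_numeral_not_square[of 11]
    by (simp_all add: not_square_if_negative)
  note spec = Qmu_specializations(3-7) specializes_to_mult[OF Qmu_specializations(6,7)]
  show "\<not> is_square (3 * torsion_x mvar qmu + 2 * (mvar*qmu + 1))"
    using not_square_if_specializes_to[OF spec(1)] rat by simp
  show "\<not> is_square (3 * torsion_x mvar qmu - 2 * (mvar*qmu + 1))"
    using not_square_if_specializes_to[OF spec(2)] rat by simp
  show "\<not> is_square (-3 * torsion_x mvar qmu ^ 2 - 4 * EA mvar qmu)"
    using not_square_if_specializes_to[OF spec(3)] rat by simp
  show "\<not> is_square (P_x mvar qmu - torsion_x mvar qmu)"
    using not_square_if_specializes_to[OF spec(4)] rat by simp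
  show "\<not> is_square (H_x mvar uvar - torsion_x mvar qmu)"
    using not_square_if_specializes_to[OF spec(5)] rat by simp
  show "\<not> is_square ((P_x mvar qmu - torsion_x mvar qmu) * (H_x mvar uvar - torsion_x mvar qmu))"
    using not_square_if_specializes_to[OF spec(6)] rat by simp
qed

theorem theorem3:
  fixes m u q :: Qmu
  defines "m \<equiv> mvar" and "u \<equiv> uvar" and "q \<equiv> 2 * (u - m) / (1 + m^2 - u^2)"
  shows "nonsingular (EA m q) (EB m q)
    \<and> on_curve (EA m q) (EB m q) (Ppt m q)
    \<and> on_curve (EA m q) (EB m q) (Hpt m u)
    \<and> (\<forall>a b :: int. ec_add (EA m q) (ec_zmul (EA m q) a (Ppt m q)) (ec_zmul (EA m q) b (Hpt m u)) = None
                      \<longrightarrow> a = 0 \<and> b = 0)"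
proof -
  have m: "m = mvar" and u: "u = uvar" and q: "q = qmu"
    unfolding m_def u_def q_def qmu_def by simp_all
  interpret E: weierstrass_2torsion "EA mvar qmu" "EB mvar qmu" "torsion_x mvar qmu"
    by unfold_locales (simp_all add: Qmu_nonsingular torsion_x_root)
  have on: "on_curve (EA mvar qmu) (EB mvar qmu) (Ppt mvar qmu)"
    "on_curve (EA mvar qmu) (EB mvar qmu) (Hpt mvar uvar)"
    using on_curve_Ppt on_curve_Hpt[OF Qmu_denominator_nonzero] by (simp_all add: qmu_def)
  note independent = E.ec_independent_by_2_descent[OF torsion_x_derivative Qmu_not_squares(1-3)
      on[unfolded Ppt_eq Hpt_eq] Qmu_not_squares(4-6)]
  show ?thesis
    unfolding m u q using Qmu_nonsingular on independent by (simp add: Ppt_eq Hpt_eq)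
qed

end
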